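(* Let $\mathcal{H}$ be a reproducing kernel Hilbert space of real-valued functions on $\mathbb{R}^p$ with positive definite reproducing kernel $K:\mathbb{R}^p\times\mathbb{R}^p\to\mathbb{R}$ and norm $\|\cdot\|_{\mathcal{H}}$. Let training data $\{(y_i,\mathbf{x}_i)\}_{i=1}^N\subset\mathbb{R}\times\mathbb{R}^p$ be given, let $\mu\ge 0$, let $s\in\{1,\dots,N\}$, and let $\lambda_0\ge 0$. For $f\in\mathcal{H}$ set $r_i(f):=y_i-f(\mathbf{x}_i)$ and let $r_{[1]}^2(f)\le\dots\le r_{[N]}^2(f)$ denote the squared residuals $r_1^2(f),\dots,r_N^2(f)$ sorted in nondecreasing order. Suppose $(\hat f,\hat{\mathbf{o}})\in\mathcal{H}\times\mathbb{R}^N$ is a minimizer of $$\min_{f\in\mathcal{H},\ \mathbf{o}\in\mathbb{R}^N}\Big[\sum_{i=1}^N (y_i-f(\mathbf{x}_i)-o_i)^2+\mu\|f\|_{\mathcal{H}}^2+\lambda_0\|\mathbf{o}\|_0\Big],$$ where $\|\mathbf{o}\|_0$ is the number of nonzero entries of $\mathbf{o}=[o_1,\dots,o_N]'$, and suppose $\lambda_0$ is such that $\|\hat{\mathbf{o}}\|_0=N-s$. Then $\hat f$ is a minimizer of the variational least-trimmed squares problem $$\min_{f\in\mathcal{H}}\Big[\sum_{i=1}^{s} r_{[i]}^2(f)+\mu\|f\|_{\mathcal{H}}^2\Big].$$ *)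

theory Defs
  imports "HOL-Analysis.Analysis"
begin

definition pd_kernel :: "(real^'p \<Rightarrow> real^'p \<Rightarrow> real) \<Rightarrow> bool" where
  "pd_kernel K \<longleftrightarrow> (\<forall>z x. K z x = K x z) \<and>
     (\<forall>(n::nat) (pts::nat \<Rightarrow> real^'p) (c::nat \<Rightarrow> real).
        (\<Sum>i<n. \<Sum>j<n. c i * c j * K (pts i) (pts j)) \<ge> 0)"

text \<open>The Hilbert space type 'h (real inner product space, complete) is a space of
  real-valued functions on R^p via the injective linear embedding ev, with reproducing
  kernel K: for each point z, K(.,z) belongs to H (as ev k_z) and f(z) = <f, k_z>.\<close>
definition rkhs :: "('h::{real_inner,complete_space} \<Rightarrow> (real^'p \<Rightarrow> real))
                     \<Rightarrow> (real^'p \<Rightarrow> real^'p \<Rightarrow> real) \<Rightarrow> bool" where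
  "rkhs ev K \<longleftrightarrow> inj ev \<and>
     (\<forall>f g x. ev (f + g) x = ev f x + ev g x) \<and>
     (\<forall>a f x. ev (a *\<^sub>R f) x = a * ev f x) \<and>
     (\<forall>z. \<exists>k. ev k = (\<lambda>x. K x z) \<and> (\<forall>f. ev f z = inner f k))"

definition resid :: "('h \<Rightarrow> (real^'p \<Rightarrow> real)) \<Rightarrow> (nat \<Rightarrow> real) \<Rightarrow> (nat \<Rightarrow> real^'p)
                     \<Rightarrow> 'h \<Rightarrow> nat \<Rightarrow> real" where
  "resid ev y x f i = y i - ev f (x i)"

definition l0norm :: "nat \<Rightarrow> (nat \<Rightarrow> real) \<Rightarrow> nat" where
  "l0norm N ov = card {i \<in> {1..N}. ov i \<noteq> 0}"

definition l0_cost :: "('h::real_normed_vector \<Rightarrow> (real^'p \<Rightarrow> real)) \<Rightarrow> nat \<Rightarrow> (nat \<Rightarrow> real)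
     \<Rightarrow> (nat \<Rightarrow> real^'p) \<Rightarrow> real \<Rightarrow> real \<Rightarrow> 'h \<Rightarrow> (nat \<Rightarrow> real) \<Rightarrow> real" where
  "l0_cost ev N y x \<mu> lam0 f ov =
     (\<Sum>i=1..N. (y i - ev f (x i) - ov i)^2) + \<mu> * (norm f)^2 + lam0 * real (l0norm N ov)"

definition sorted_sq_resid :: "('h \<Rightarrow> (real^'p \<Rightarrow> real)) \<Rightarrow> nat \<Rightarrow> (nat \<Rightarrow> real)
     \<Rightarrow> (nat \<Rightarrow> real^'p) \<Rightarrow> 'h \<Rightarrow> real list" where
  "sorted_sq_resid ev N y x f = sort (map (\<lambda>i. (resid ev y x f i)^2) [1..<N+1])"

definition lts_cost :: "('h::real_normed_vector \<Rightarrow> (real^'p \<Rightarrow> real)) \<Rightarrow> nat \<Rightarrow> (nat \<Rightarrow> real)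
     \<Rightarrow> (nat \<Rightarrow> real^'p) \<Rightarrow> real \<Rightarrow> nat \<Rightarrow> 'h \<Rightarrow> real" where
  "lts_cost ev N y x \<mu> s f =
     (\<Sum>i=1..s. sorted_sq_resid ev N y x f ! (i - 1)) + \<mu> * (norm f)^2"

end

theory Submission
  imports Defs "HOL-Library.Multiset"
begin

text \<open>For a fixed f the inner minimisation over o is explicit: putting o_i = r_i(f) on
  N - s indices and o_i = 0 on the remaining s indices costs the sum of the s squared
  residuals that are kept, and the best choice keeps the s smallest ones. Hence, once the
  l0 term is frozen at lam0 (N - s), the l0-penalised cost dominates the trimmed cost and
  the two agree at the optimal o for f; so a minimiser with N - s outliers minimises the
  trimmed cost. No property of the kernel or of the Hilbert space is used.\<close>

lemma sort_map_eq_map_sort_key: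
  "sort (map f xs) = map f (sort_key f xs)"
  by (rule properties_for_sort) (simp_all add: mset_map)

lemma sum_le_sum_if_exchange:
  fixes a :: "'a \<Rightarrow> 'b::ordered_comm_monoid_add"
  assumes "finite U" "finite T" "card U = card T"
    and "\<And>u t. u \<in> U - T \<Longrightarrow> t \<in> T - U \<Longrightarrow> a u \<le> a t"
  shows "sum a U \<le> sum a T"
proof -
  have "card (U - T) = card (T - U)"
    using assms(1-3) by (simp add: card_Diff_subset_Int inf_commute)
  then obtain g where g: "bij_betw g (U - T) (T - U)"
    using assms(1,2) by (metis finite_Diff finite_same_card_bij)
  have "sum a (U - T) \<le> sum (a \<circ> g) (U - T)"
    using assms(4) bij_betwE[OF g] by (intro sum_mono) auto
  also have "\<dots> = sum a (T - U)"
    using g sum.reindex[of g "U - T" a] by (simp add: bij_betw_def)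
  finally have "sum a (U \<inter> T) + sum a (U - T) \<le> sum a (U \<inter> T) + sum a (T - U)"
    by (rule add_left_mono)
  with assms(1,2) show ?thesis
    by (simp add: sum.Int_Diff[of U a T] sum.Int_Diff[of T a U] inf_commute)
qed

lemma sum_list_take_sort_map:
  assumes "distinct xs"
  shows "sum_list (take s (sort (map a xs))) = sum a (set (take s (sort_key a xs)))"
  using assms
  by (simp add: sort_map_eq_map_sort_key flip: take_map sum_list_distinct_conv_sum_set)

lemma sum_take_sort_key_le:
  fixes a :: "'a \<Rightarrow> 'b::{linorder, ordered_comm_monoid_add}"
  assumes "distinct xs" "T \<subseteq> set xs" "card T = s"
  shows "sum a (set (take s (sort_key a xs))) \<le> sum a T"
proof (rule sum_le_sum_if_exchange)
  let ?ys = "sort_key a xs"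
  have "s \<le> length xs"
    using assms by (metis card_mono distinct_card List.finite_set)
  then show "card (set (take s ?ys)) = card T"
    using assms by (simp add: distinct_card)
  have "sorted (map a (take s ?ys) @ map a (drop s ?ys))"
    by (metis append_take_drop_id map_append sorted_sort_key)
  moreover have "set ?ys = set (take s ?ys) \<union> set (drop s ?ys)"
    by (metis append_take_drop_id set_append)
  ultimately show "a u \<le> a t" if "u \<in> set (take s ?ys) - T" "t \<in> T - set (take s ?ys)" for u t
    using that assms(2) by (auto simp: sorted_append)
qed (use assms in \<open>auto intro: finite_subset\<close>)

lemma sum_list_take_sort_map_le:
  fixes a :: "'a \<Rightarrow> 'b::{linorder, ordered_comm_monoid_add}"
  assumes "distinct xs" "T \<subseteq> set xs" "card T = s"
  shows "sum_list (take s (sort (map a xs))) \<le> sum a T"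
  using sum_take_sort_key_le[OF assms] by (simp add: sum_list_take_sort_map[OF assms(1)])

lemma sum_list_take_sort_map_attained:
  assumes "distinct xs" "s \<le> length xs"
  shows "\<exists>U \<subseteq> set xs. card U = s \<and> sum_list (take s (sort (map a xs))) = sum a U"
  using assms by (intro exI[of _ "set (take s (sort_key a xs))"])
    (auto simp: sum_list_take_sort_map distinct_card dest: in_set_takeD)

lemma sum_nth_pred_eq_sum_list_take:
  assumes "s \<le> length xs"
  shows "(\<Sum>i=1..s. xs ! (i - 1)) = sum_list (take s xs)"
proof -
  have "(\<Sum>i=1..s. xs ! (i - 1)) = (\<Sum>j<s. xs ! j)"
    by (rule sum.reindex_bij_witness[where i="\<lambda>j. j + 1" and j="\<lambda>i. i - 1"]) auto
  with assms show ?thesis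
    by (simp add: sum_list_sum_nth min_def atLeast0LessThan)
qed

lemma lts_cost_eq_sum_list_take:
  assumes "s \<le> N"
  shows "lts_cost ev N y x \<mu> s f =
    sum_list (take s (sort (map (\<lambda>i. (resid ev y x f i)^2) [1..<N+1]))) + \<mu> * (norm f)^2"
  using assms unfolding lts_cost_def sorted_sq_resid_def
  by (subst sum_nth_pred_eq_sum_list_take) simp_all

lemma lts_cost_le_l0_cost:
  assumes "s \<le> N" "l0norm N ov = N - s"
  shows "lts_cost ev N y x \<mu> s f + lam0 * real (N - s) \<le> l0_cost ev N y x \<mu> lam0 f ov"
proof -
  define T where "T = {i \<in> {1..N}. ov i = 0}"
  have "{1..N} = T \<union> {i \<in> {1..N}. ov i \<noteq> 0}" "T \<inter> {i \<in> {1..N}. ov i \<noteq> 0} = {}"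
    unfolding T_def by auto
  then have "N = card T + (N - s)"
    using assms(2) unfolding l0norm_def by (metis card_Un_disjoint card_atLeastAtMost
      diff_Suc_1 finite_Un finite_atLeastAtMost)
  then have "card T = s"
    using assms(1) by linarith
  then have "sum_list (take s (sort (map (\<lambda>i. (resid ev y x f i)^2) [1..<N+1])))
      \<le> (\<Sum>i\<in>T. (resid ev y x f i)^2)"
    by (intro sum_list_take_sort_map_le) (auto simp: T_def)
  also have "\<dots> = (\<Sum>i\<in>T. (y i - ev f (x i) - ov i)^2)"
    by (rule sum.cong) (auto simp: T_def resid_def)
  also have "\<dots> \<le> (\<Sum>i=1..N. (y i - ev f (x i) - ov i)^2)"
    by (rule sum_mono2) (auto simp: T_def)
  finally show ?thesis
    using assms by (simp add: lts_cost_eq_sum_list_take l0_cost_def)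
qed

lemma l0_cost_le_lts_cost:
  assumes "s \<le> N" "lam0 \<ge> 0"
  shows "\<exists>ov. l0_cost ev N y x \<mu> lam0 f ov \<le> lts_cost ev N y x \<mu> s f + lam0 * real (N - s)"
proof -
  define r where "r = (\<lambda>i. (resid ev y x f i)^2)"
  have "\<exists>U \<subseteq> set [1..<N+1]. card U = s \<and> sum_list (take s (sort (map r [1..<N+1]))) = sum r U"
    using assms(1) by (intro sum_list_take_sort_map_attained) simp_all
  then obtain U where U: "U \<subseteq> {1..N}" "card U = s"
      "sum_list (take s (sort (map r [1..<N+1]))) = sum r U"
    by (auto simp del: upt_Suc simp add: atLeastLessThanSuc_atLeastAtMost)
  define ov where "ov = (\<lambda>i. if i \<in> U then 0 else resid ev y x f i)"
  have "(\<Sum>i=1..N. (y i - ev f (x i) - ov i)^2) = (\<Sum>i=1..N. if i \<in> U then r i else 0)"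
    unfolding ov_def r_def resid_def by (rule sum.cong) auto
  also have "\<dots> = sum r U"
    using U(1) by (simp add: sum.If_cases Int_absorb1)
  finally have kept: "(\<Sum>i=1..N. (y i - ev f (x i) - ov i)^2) = sum r U" .
  have "l0norm N ov \<le> card ({1..N} - U)"
    unfolding l0norm_def ov_def by (rule card_mono) auto
  also have "\<dots> = N - s"
    using U by (simp add: card_Diff_subset finite_subset)
  finally have "lam0 * real (l0norm N ov) \<le> lam0 * real (N - s)"
    using assms(2) by (intro mult_left_mono) auto
  then show ?thesis
    using assms(1) U(3) kept
    by (intro exI[of _ ov]) (simp add: l0_cost_def lts_cost_eq_sum_list_take r_def)
qed

theorem proposition1:
  fixes ev :: "'h::{real_inner,complete_space} \<Rightarrow> (real^'p \<Rightarrow> real)"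
    and K :: "real^'p \<Rightarrow> real^'p \<Rightarrow> real"
    and N s :: nat and y :: "nat \<Rightarrow> real" and x :: "nat \<Rightarrow> real^'p"
    and \<mu> lam0 :: real and fh :: 'h and oh :: "nat \<Rightarrow> real"
  assumes "rkhs ev K" and "pd_kernel K"
    and "\<mu> \<ge> 0" and "s \<in> {1..N}" and "lam0 \<ge> 0"
    and "\<forall>f ov. l0_cost ev N y x \<mu> lam0 fh oh \<le> l0_cost ev N y x \<mu> lam0 f ov"
    and "l0norm N oh = N - s"
  shows "\<forall>f. lts_cost ev N y x \<mu> s fh \<le> lts_cost ev N y x \<mu> s f"
proof
  fix f
  have "s \<le> N"
    using assms(4) by simp
  then obtain ov where
    "l0_cost ev N y x \<mu> lam0 f ov \<le> lts_cost ev N y x \<mu> s f + lam0 * real (N - s)"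
    using l0_cost_le_lts_cost assms(5) by blast
  moreover have
    "lts_cost ev N y x \<mu> s fh + lam0 * real (N - s) \<le> l0_cost ev N y x \<mu> lam0 fh oh"
    using lts_cost_le_l0_cost \<open>s \<le> N\<close> assms(7) by blast
  ultimately show "lts_cost ev N y x \<mu> s fh \<le> lts_cost ev N y x \<mu> s f"
    using assms(6) by (meson add_le_cancel_right order_trans)
qed

end
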